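(* For every $d\ge1$, $\theta_{d+1}^*\le\theta_d^*$.
   Context: For $d\ge1$, call a probability density $f$ on $\mathbb R^d$ admissible if it is smooth, strictly positive, rapidly decaying, and $\mathcal Q[f]>0$. Define $\theta_d^*=\inf_f \mathcal I[f]\mathcal D[f]/\mathcal Q[f]^2$, the infimum over admissible densities on $\mathbb R^d$ (possibly $-\infty$). Here, writing $f=e^u$ and $\mathsf H_f=-\nabla^2u$: $\mathcal I[f]=\int\operatorname{tr}(\mathsf H_f)f\,dx$, $\mathcal Q[f]=\int\operatorname{tr}(\mathsf H_f^2)f\,dx$, $\mathcal D[f]=\int(|\nabla\mathsf H_f|^2+2\operatorname{tr}(\mathsf H_f^3))f\,dx$, with $|\nabla\mathsf H_f|^2=\sum_{i,j,k}(\partial_k(\mathsf H_f)_{ij})^2$. *)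

theory Defs
  imports "HOL-Analysis.Analysis"
begin

text \<open>Euclidean space R^d is modelled as real^'n with d = CARD('n).
  Partial derivative in coordinate i (directional derivative along the unit vector axis i 1).\<close>

definition pd :: "'n::finite \<Rightarrow> (real^'n \<Rightarrow> real) \<Rightarrow> real^'n \<Rightarrow> real" where
  "pd i g x = deriv (\<lambda>t. g (x + t *\<^sub>R axis i 1)) 0"

fun iter_pd :: "'n::finite list \<Rightarrow> (real^'n \<Rightarrow> real) \<Rightarrow> real^'n \<Rightarrow> real" where
  "iter_pd [] g = g"
| "iter_pd (i # is) g = pd i (iter_pd is g)"

definition smooth_fun :: "(real^'n::finite \<Rightarrow> real) \<Rightarrow> bool" where
  "smooth_fun g \<longleftrightarrow> (\<forall>is. \<forall>x. iter_pd is g differentiable (at x))"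

definition rapidly_decaying :: "(real^'n::finite \<Rightarrow> real) \<Rightarrow> bool" where
  "rapidly_decaying g \<longleftrightarrow> (\<forall>is (k::nat). bounded (range (\<lambda>x. norm x ^ k * iter_pd is g x)))"

definition Hf :: "(real^'n::finite \<Rightarrow> real) \<Rightarrow> 'n \<Rightarrow> 'n \<Rightarrow> real^'n \<Rightarrow> real" where
  "Hf f i j x = - pd i (pd j (\<lambda>y. ln (f y))) x"

definition tr_H :: "(real^'n::finite \<Rightarrow> real) \<Rightarrow> real^'n \<Rightarrow> real" where
  "tr_H f x = (\<Sum>i\<in>UNIV. Hf f i i x)"

definition tr_H2 :: "(real^'n::finite \<Rightarrow> real) \<Rightarrow> real^'n \<Rightarrow> real" where
  "tr_H2 f x = (\<Sum>i\<in>UNIV. \<Sum>j\<in>UNIV. Hf f i j x * Hf f j i x)"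

definition tr_H3 :: "(real^'n::finite \<Rightarrow> real) \<Rightarrow> real^'n \<Rightarrow> real" where
  "tr_H3 f x = (\<Sum>i\<in>UNIV. \<Sum>j\<in>UNIV. \<Sum>k\<in>UNIV. Hf f i j x * Hf f j k x * Hf f k i x)"

definition gradH_sq :: "(real^'n::finite \<Rightarrow> real) \<Rightarrow> real^'n \<Rightarrow> real" where
  "gradH_sq f x = (\<Sum>i\<in>UNIV. \<Sum>j\<in>UNIV. \<Sum>k\<in>UNIV. (pd k (Hf f i j) x)\<^sup>2)"

definition I_fun :: "(real^'n::finite \<Rightarrow> real) \<Rightarrow> real" where
  "I_fun f = integral\<^sup>L lborel (\<lambda>x. tr_H f x * f x)"

definition Q_fun :: "(real^'n::finite \<Rightarrow> real) \<Rightarrow> real" where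
  "Q_fun f = integral\<^sup>L lborel (\<lambda>x. tr_H2 f x * f x)"

definition D_fun :: "(real^'n::finite \<Rightarrow> real) \<Rightarrow> real" where
  "D_fun f = integral\<^sup>L lborel (\<lambda>x. (gradH_sq f x + 2 * tr_H3 f x) * f x)"

definition admissible :: "(real^'n::finite \<Rightarrow> real) \<Rightarrow> bool" where
  "admissible f \<longleftrightarrow> smooth_fun f \<and> (\<forall>x. f x > 0) \<and> rapidly_decaying f
     \<and> integrable lborel f \<and> integral\<^sup>L lborel f = 1
     \<and> integrable lborel (\<lambda>x. tr_H f x * f x)
     \<and> integrable lborel (\<lambda>x. tr_H2 f x * f x)
     \<and> integrable lborel (\<lambda>x. (gradH_sq f x + 2 * tr_H3 f x) * f x)
     \<and> Q_fun f > 0"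

text \<open>theta^*_d for d = CARD('n), as an extended real (possibly -infinity).\<close>
definition theta_star :: "'n::finite itself \<Rightarrow> ereal" where
  "theta_star _ = (INF f \<in> {f :: real^'n \<Rightarrow> real. admissible f}.
                     ereal (I_fun f * D_fun f / (Q_fun f)\<^sup>2))"

end

theory Submission
  imports Defs "HOL-Probability.Distributions" "HOL-Computational_Algebra.Polynomial"
begin

text \<open>Split R^(d+1) as R^d \<times> R and tensor an admissible density f on R^d with a centred
  Gaussian of variance s^2 in the extra coordinate. Since ln F = ln f + (quadratic in the extra
  coordinate), the matrix H_F is block diagonal with blocks H_f and a = 1/s^2, and the Gaussian
  factor integrates out: I[F] = I[f] + a, Q[F] = Q[f] + a^2, D[F] = D[f] + 2a^3. The new density
  is again admissible, and as s \<rightarrow> \<infinity> its ratio I D / Q^2 tends to that of f, so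
  theta^*_(d+1) is bounded by every ratio attained in dimension d.\<close>

lemma deriv_add_const: "deriv (\<lambda>t. h t + c) x = deriv h x"
proof -
  have "((\<lambda>t. h t + c) has_field_derivative D) (at x) \<longleftrightarrow> (h has_field_derivative D) (at x)" for D
    using DERIV_add[OF _ DERIV_const[of "-c"], of "\<lambda>t. h t + c"] DERIV_add[OF _ DERIV_const[of c], of h]
    by auto
  then show ?thesis unfolding deriv_def by simp
qed

lemma deriv_const_add: "deriv (\<lambda>t. c + h t) x = deriv h x"
  using deriv_add_const[of h c x] by (simp add: add.commute)

lemma has_field_derivative_along_line:
  fixes A :: "'a::real_normed_vector \<Rightarrow> real"
  assumes "A differentiable (at u)"
  shows "((\<lambda>t. A (u + t *\<^sub>R v)) has_field_derivative deriv (\<lambda>t. A (u + t *\<^sub>R v)) 0) (at 0)"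
proof -
  have "(\<lambda>t::real. u + t *\<^sub>R v) differentiable (at 0)"
    by (auto intro!: derivative_intros)
  then have "(\<lambda>t. A (u + t *\<^sub>R v)) differentiable (at 0)"
    using differentiable_compose[of A "\<lambda>t. u + t *\<^sub>R v" 0 UNIV] assms by simp
  then show ?thesis using DERIV_deriv_iff_real_differentiable by blast
qed

lemma power_div_fact_le_exp:
  fixes z :: real
  assumes "z \<ge> 0"
  shows "z ^ n / fact n \<le> exp z"
proof -
  have "(\<Sum>m\<in>{n}. z ^ m /\<^sub>R fact m) \<le> (\<Sum>m. z ^ m /\<^sub>R fact m)"
    using assms by (intro sum_le_suminf summable_exp_generic) auto
  then show ?thesis by (simp add: exp_def divide_inverse mult.commute)
qed

lemma power_sum_le:
  fixes a b :: real
  assumes "a \<ge> 0" "b \<ge> 0"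
  shows "(a + b) ^ k \<le> 2 ^ k * (a ^ k + b ^ k)"
proof -
  have "(a + b) ^ k \<le> (2 * max a b) ^ k" using assms by (intro power_mono) auto
  also have "\<dots> = 2 ^ k * max a b ^ k" by (simp add: power_mult_distrib)
  also have "max a b ^ k \<le> a ^ k + b ^ k" using assms by (cases "a \<le> b") (auto simp: max_def)
  then have "2 ^ k * max a b ^ k \<le> 2 ^ k * (a ^ k + b ^ k)" by simp
  finally show ?thesis .
qed

subsection \<open>Derivatives of the Gaussian\<close>

primrec gauss_deriv_poly :: "real \<Rightarrow> nat \<Rightarrow> real poly" where
  "gauss_deriv_poly s 0 = [:1 / sqrt (2 * pi * s\<^sup>2):]"
| "gauss_deriv_poly s (Suc k) = pderiv (gauss_deriv_poly s k) - [:0, 1 / s\<^sup>2:] * gauss_deriv_poly s k"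

definition gauss_deriv :: "real \<Rightarrow> nat \<Rightarrow> real \<Rightarrow> real" where
  "gauss_deriv s k y = poly (gauss_deriv_poly s k) y * exp (- (y\<^sup>2) / (2 * s\<^sup>2))"

lemma gauss_deriv_0: "gauss_deriv s 0 = normal_density 0 s"
  by (auto simp: gauss_deriv_def normal_density_def fun_eq_iff)

lemma has_field_derivative_gauss_deriv:
  assumes "s > 0"
  shows "(gauss_deriv s k has_field_derivative gauss_deriv s (Suc k) y) (at y)"
proof -
  let ?p = "gauss_deriv_poly s k" and ?E = "exp (- (y\<^sup>2) / (2 * s\<^sup>2))"
  have "((\<lambda>y. poly ?p y * exp (- (y\<^sup>2) / (2 * s\<^sup>2))) has_field_derivative
      poly (pderiv ?p) y * ?E + poly ?p y * (?E * (- (2 * y) / (2 * s\<^sup>2)))) (at y)"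
    using assms by (auto intro!: derivative_eq_intros poly_DERIV simp: power2_eq_square)
  moreover have "poly (pderiv ?p) y * ?E + poly ?p y * (?E * (- (2 * y) / (2 * s\<^sup>2)))
      = gauss_deriv s (Suc k) y"
    using assms by (simp add: gauss_deriv_def algebra_simps)
  ultimately show ?thesis unfolding gauss_deriv_def[abs_def] by simp
qed

lemma gauss_deriv_differentiable: "s > 0 \<Longrightarrow> gauss_deriv s k differentiable (at y)"
  using has_field_derivative_gauss_deriv
  by (metis real_differentiable_def differentiable_def has_field_derivative_imp_has_derivative)

lemma power_gaussian_le:
  fixes y :: real
  assumes "s > 0"
  shows "\<bar>y\<bar> ^ n * exp (- (y\<^sup>2) / (2 * s\<^sup>2)) \<le> fact n * exp (s\<^sup>2 / 2)"
proof -
  \<comment> \<open>completing the square: 2 s^2 |y| - y^2 \<le> s^4\<close>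
  have "\<bar>y\<bar> - y\<^sup>2 / (2 * s\<^sup>2) \<le> s\<^sup>2 / 2"
    using assms sum_squares_ge_zero[of "\<bar>y\<bar> - s\<^sup>2" 0]
    by (simp add: field_simps power2_eq_square)
  have "\<bar>y\<bar> ^ n * exp (- (y\<^sup>2) / (2 * s\<^sup>2)) \<le> fact n * exp \<bar>y\<bar> * exp (- (y\<^sup>2) / (2 * s\<^sup>2))"
    using power_div_fact_le_exp[of "\<bar>y\<bar>" n] by (intro mult_right_mono) (auto simp: field_simps)
  also have "\<dots> = fact n * exp (\<bar>y\<bar> - y\<^sup>2 / (2 * s\<^sup>2))"
    by (simp add: exp_add[symmetric])
  also have "\<dots> \<le> fact n * exp (s\<^sup>2 / 2)"
    using \<open>\<bar>y\<bar> - y\<^sup>2 / (2 * s\<^sup>2) \<le> s\<^sup>2 / 2\<close> by simp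
  finally show ?thesis .
qed

lemma gauss_deriv_moment_bounded:
  assumes "s > 0"
  shows "\<exists>C. \<forall>y. \<bar>y\<bar> ^ j * \<bar>gauss_deriv s k y\<bar> \<le> C"
proof (intro exI allI)
  fix y :: real
  define p where "p = gauss_deriv_poly s k"
  let ?E = "exp (- (y\<^sup>2) / (2 * s\<^sup>2))"
  have "\<bar>y\<bar> ^ j * \<bar>gauss_deriv s k y\<bar> = \<bar>\<Sum>i\<le>degree p. coeff p i * y ^ i\<bar> * (\<bar>y\<bar> ^ j * ?E)"
    by (simp add: gauss_deriv_def p_def poly_altdef abs_mult)
  also have "\<dots> \<le> (\<Sum>i\<le>degree p. \<bar>coeff p i\<bar> * \<bar>y\<bar> ^ i) * (\<bar>y\<bar> ^ j * ?E)"
    by (intro mult_right_mono order.trans[OF sum_abs]) (auto simp: abs_mult power_abs)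
  also have "\<dots> = (\<Sum>i\<le>degree p. \<bar>coeff p i\<bar> * (\<bar>y\<bar> ^ (i + j) * ?E))"
    unfolding sum_distrib_right by (intro sum.cong refl) (simp add: power_add mult_ac)
  also have "\<dots> \<le> (\<Sum>i\<le>degree p. \<bar>coeff p i\<bar> * (fact (i + j) * exp (s\<^sup>2 / 2)))"
    by (intro sum_mono mult_left_mono power_gaussian_le assms) auto
  finally show "\<bar>y\<bar> ^ j * \<bar>gauss_deriv s k y\<bar> \<le> (\<Sum>i\<le>degree p. \<bar>coeff p i\<bar> * (fact (i + j) * exp (s\<^sup>2 / 2)))" .
qed

subsection \<open>Splitting off one coordinate\<close>

text \<open>The index type 'm of R^(d+1) is identified with 'n option via e; None is the extra coordinate.\<close>
locale coord_split =
  fixes e :: "'m::finite \<Rightarrow> 'n::finite option"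
  assumes bij_e: "bij e"
begin

definition coord :: "'n option \<Rightarrow> 'm" where "coord = inv e"
definition base :: "real^'m \<Rightarrow> real^'n" where "base x = (\<chi> k. x $ coord (Some k))"
definition extra :: "real^'m \<Rightarrow> real" where "extra x = x $ coord None"

lemma e_coord [simp]: "e (coord z) = z"
  unfolding coord_def using bij_e by (simp add: bij_is_surj surj_f_inv_f)

lemma coord_e [simp]: "coord (e i) = i"
  unfolding coord_def using bij_e by (simp add: bij_is_inj)

lemma coord_eq_iff: "coord z = i \<longleftrightarrow> e i = z"
  by (metis e_coord coord_e)

lemma all_coord_split: "(\<forall>i. P i) \<longleftrightarrow> P (coord None) \<and> (\<forall>k. P (coord (Some k)))"
  by (metis option.exhaust coord_e)

lemma sum_coord_split: "(\<Sum>i\<in>UNIV. \<psi> i) = \<psi> (coord None) + (\<Sum>k\<in>UNIV. \<psi> (coord (Some k)))"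
proof -
  have "bij coord" unfolding coord_def using bij_e by (simp add: bij_imp_bij_inv)
  then have "(\<Sum>i\<in>UNIV. \<psi> i) = (\<Sum>z\<in>UNIV. \<psi> (coord z))"
    using sum.reindex_bij_betw[of coord UNIV UNIV \<psi>] by (simp add: bij_def bij_betw_def)
  then show ?thesis by (simp add: UNIV_option_conv sum.reindex)
qed

lemma prod_coord_split: "(\<Prod>i\<in>UNIV. \<psi> i) = \<psi> (coord None) * (\<Prod>k\<in>UNIV. \<psi> (coord (Some k)))"
proof -
  have "bij coord" unfolding coord_def using bij_e by (simp add: bij_imp_bij_inv)
  then have "(\<Prod>i\<in>UNIV. \<psi> i) = (\<Prod>z\<in>UNIV. \<psi> (coord z))"
    using prod.reindex_bij_betw[of coord UNIV UNIV \<psi>] by (simp add: bij_def bij_betw_def)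
  then show ?thesis by (simp add: UNIV_option_conv prod.reindex)
qed

lemma bounded_linear_base: "bounded_linear base"
proof -
  have "linear base" by (rule linearI) (auto simp: base_def vec_eq_iff)
  then show ?thesis by (simp add: linear_conv_bounded_linear)
qed

lemma bounded_linear_extra: "bounded_linear extra"
  unfolding extra_def[abs_def] by (rule bounded_linear_vec_nth)

lemma norm_le_base_extra: "norm x \<le> norm (base x) + \<bar>extra x\<bar>"
proof -
  have "(norm x)\<^sup>2 = (extra x)\<^sup>2 + (norm (base x))\<^sup>2"
    unfolding power2_norm_eq_inner inner_vec_def
    by (subst sum_coord_split) (simp add: base_def extra_def power2_eq_square)
  also have "\<dots> \<le> (norm (base x) + \<bar>extra x\<bar>)\<^sup>2"
    by (simp add: power2_sum)
  finally show ?thesis by (rule power2_le_imp_le) simp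
qed

lemma base_add_axis:
  "base (x + t *\<^sub>R axis i 1) = base x + t *\<^sub>R (case e i of Some k \<Rightarrow> axis k 1 | None \<Rightarrow> 0)"
  by (cases "e i") (auto simp: vec_eq_iff base_def axis_def coord_eq_iff)

lemma extra_add_axis: "extra (x + t *\<^sub>R axis i 1) = extra x + (case e i of Some k \<Rightarrow> 0 | None \<Rightarrow> t)"
  by (cases "e i") (auto simp: extra_def axis_def coord_eq_iff)

lemma pd_base_extra: "pd i (\<lambda>x. \<Phi> (base x) (extra x)) x = (case e i of
     Some k \<Rightarrow> deriv (\<lambda>t. \<Phi> (base x + t *\<^sub>R axis k 1) (extra x)) 0
   | None \<Rightarrow> deriv (\<lambda>t. \<Phi> (base x) (extra x + t)) 0)"
  by (cases "e i") (simp_all add: pd_def base_add_axis extra_add_axis)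

lemma differentiable_tensor:
  fixes A :: "real^'n \<Rightarrow> real" and B :: "real \<Rightarrow> real"
  assumes "\<And>u. A differentiable (at u)" "\<And>y. B differentiable (at y)"
  shows "(\<lambda>x. A (base x) * B (extra x)) differentiable (at x)"
proof -
  have "(\<lambda>x. A (base x)) differentiable (at x)"
    by (rule differentiable_compose[OF assms(1) bounded_linear_imp_differentiable[OF bounded_linear_base]])
  moreover have "(\<lambda>x. B (extra x)) differentiable (at x)"
    by (rule differentiable_compose[OF assms(2) bounded_linear_imp_differentiable[OF bounded_linear_extra]])
  ultimately show ?thesis using differentiable_mult[of "\<lambda>x. A (base x)" x UNIV "\<lambda>x. B (extra x)"] by auto
qed

lemma bounded_moments_tensor:
  fixes A :: "real^'n \<Rightarrow> real" and B :: "real \<Rightarrow> real"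
  assumes A: "\<And>j. \<exists>C. \<forall>u. \<bar>norm u ^ j * A u\<bar> \<le> C"
    and B: "\<And>j. \<exists>C. \<forall>y. \<bar>y\<bar> ^ j * \<bar>B y\<bar> \<le> C"
  shows "bounded (range (\<lambda>x. norm x ^ k * (A (base x) * B (extra x))))"
proof -
  obtain C1 where C1: "\<And>u. \<bar>A u\<bar> \<le> C1" using A[of 0] by auto
  obtain C2 where C2: "\<And>u. \<bar>norm u ^ k * A u\<bar> \<le> C2" using A[of k] by auto
  obtain D1 where D1: "\<And>y. \<bar>B y\<bar> \<le> D1" using B[of 0] by auto
  obtain D2 where D2: "\<And>y. \<bar>y\<bar> ^ k * \<bar>B y\<bar> \<le> D2" using B[of k] by auto
  have "\<bar>norm x ^ k * (A (base x) * B (extra x))\<bar> \<le> 2 ^ k * (C2 * D1 + C1 * D2)" for x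
  proof -
    let ?a = "norm (base x)" and ?b = "\<bar>extra x\<bar>" and ?A = "A (base x)" and ?B = "B (extra x)"
    have "norm x ^ k \<le> (?a + ?b) ^ k" by (intro power_mono norm_le_base_extra) auto
    also have "\<dots> \<le> 2 ^ k * (?a ^ k + ?b ^ k)" by (rule power_sum_le) auto
    finally have "\<bar>norm x ^ k * (?A * ?B)\<bar> \<le> 2 ^ k * (?a ^ k + ?b ^ k) * (\<bar>?A\<bar> * \<bar>?B\<bar>)"
      by (simp add: abs_mult mult_right_mono)
    also have "\<dots> = 2 ^ k * (\<bar>?a ^ k * ?A\<bar> * \<bar>?B\<bar> + \<bar>?A\<bar> * (?b ^ k * \<bar>?B\<bar>))"
      by (simp add: algebra_simps abs_mult)
    also have "\<dots> \<le> 2 ^ k * (C2 * D1 + C1 * D2)"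
      using C1[of "base x"] C2[of "base x"] D1[of "extra x"] D2[of "extra x"]
      by (intro mult_left_mono add_mono mult_mono) auto
    finally show ?thesis .
  qed
  then show ?thesis unfolding bounded_iff by auto
qed

definition split_map :: "real^'m \<Rightarrow> (real^'n) \<times> real" where
  "split_map x = (base x, extra x)"

lemma split_map_measurable [measurable]: "split_map \<in> borel_measurable borel"
proof -
  have "continuous_on UNIV split_map"
    unfolding split_map_def
    using bounded_linear_base bounded_linear_extra by (intro continuous_on_Pair linear_continuous_on)
  then show ?thesis by (rule borel_measurable_continuous_onI)
qed

lemma prod_Basis_vec: "(\<Prod>b\<in>(Basis :: (real^'a::finite) set). \<phi> b) = (\<Prod>i\<in>UNIV. \<phi> (axis i 1))"
proof -
  have "(Basis :: (real^'a) set) = range (\<lambda>i. axis i 1)" by (auto simp: Basis_vec_def)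
  moreover have "inj (\<lambda>i::'a. axis i (1::real))" by (auto intro: injI simp: axis_eq_axis)
  ultimately show ?thesis using prod.reindex[of "\<lambda>i::'a. axis i (1::real)" UNIV \<phi>] by (simp add: o_def)
qed

lemma prod_Basis_prod_real:
  "(\<Prod>b\<in>(Basis :: ('a::euclidean_space \<times> real) set). \<phi> b) = (\<Prod>b\<in>Basis. \<phi> (b, 0)) * \<phi> (0, 1)"
  unfolding Basis_prod_def by (subst prod.union_disjoint) (auto simp: prod.reindex inj_on_def)

text \<open>The split map only permutes coordinates, so it sends boxes to boxes of the same volume.\<close>
lemma distr_split_map: "distr lborel borel split_map = lborel"
proof (rule lborel_eqI[symmetric])
  fix l u :: "(real^'n) \<times> real"
  assume le: "\<And>b. b \<in> Basis \<Longrightarrow> l \<bullet> b \<le> u \<bullet> b"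
  obtain la lb ua ub where l: "l = (la, lb)" and u: "u = (ua, ub)" by (cases l, cases u)
  have lea: "la $ k \<le> ua $ k" for k using le[of "(axis k 1, 0)"] by (auto simp: l u Basis_prod_def inner_axis)
  have leb: "lb \<le> ub" using le[of "(0, 1)"] by (auto simp: l u Basis_prod_def)
  define L :: "real^'m" where "L = (\<chi> i. case e i of Some k \<Rightarrow> la $ k | None \<Rightarrow> lb)"
  define U :: "real^'m" where "U = (\<chi> i. case e i of Some k \<Rightarrow> ua $ k | None \<Rightarrow> ub)"
  have box_prod: "box (la, lb) (ua, ub) = box la ua \<times> box lb ub"
    by (auto simp add: Basis_prod_def ball_Un box_def)
  have preimage: "split_map -` box l u = box L U"
  proof (rule set_eqI)
    fix x
    have "x \<in> box L U \<longleftrightarrow> (\<forall>i. L$i < x$i \<and> x$i < U$i)" by (simp add: mem_box_cart)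
    also have "\<dots> \<longleftrightarrow> (L$(coord None) < x$(coord None) \<and> x$(coord None) < U$(coord None)) \<and>
       (\<forall>k. L$(coord (Some k)) < x$(coord (Some k)) \<and> x$(coord (Some k)) < U$(coord (Some k)))"
      by (rule all_coord_split)
    finally show "x \<in> split_map -` box l u \<longleftrightarrow> x \<in> box L U"
      unfolding l u box_prod by (auto simp: split_map_def mem_box_cart L_def U_def base_def extra_def)
  qed
  have LU: "L \<bullet> b \<le> U \<bullet> b" if b_Basis: "b \<in> Basis" for b
  proof -
    obtain i where b: "b = axis i 1" using b_Basis axis_inverse by blast
    show ?thesis using lea leb by (cases "e i") (auto simp: b inner_axis L_def U_def)
  qed
  have "emeasure (distr lborel borel split_map) (box l u) = emeasure lborel (box L U)"
    by (subst emeasure_distr) (auto simp: preimage)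
  also have "\<dots> = (\<Prod>b\<in>Basis. (U - L) \<bullet> b)" by (rule emeasure_lborel_box[OF LU])
  also have "(\<Prod>b\<in>Basis. (U - L) \<bullet> b) = (\<Prod>b\<in>Basis. (u - l) \<bullet> b)"
    unfolding prod_Basis_vec prod_Basis_prod_real
    by (subst prod_coord_split) (simp add: inner_axis L_def U_def l u mult.commute)
  finally show "emeasure (distr lborel borel split_map) (box l u) = (\<Prod>b\<in>Basis. (u - l) \<bullet> b)" .
qed simp

lemma
  fixes h :: "real^'n \<Rightarrow> real" and g :: "real \<Rightarrow> real"
  assumes h: "integrable lborel h" and g: "integrable lborel g"
  shows integrable_tensor: "integrable lborel (\<lambda>x. h (base x) * g (extra x))"
    and integral_tensor: "(\<integral>x. h (base x) * g (extra x) \<partial>lborel) = integral\<^sup>L lborel h * integral\<^sup>L lborel g"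
proof -
  define H where "H p = h (fst p) * g (snd p)" for p :: "(real^'n) \<times> real"
  have [measurable]: "h \<in> borel_measurable borel" "g \<in> borel_measurable borel"
    using borel_measurable_integrable[OF h] borel_measurable_integrable[OF g] by auto
  have H_meas: "H \<in> borel_measurable (lborel \<Otimes>\<^sub>M lborel)" unfolding H_def by measurable
  have "H \<in> borel_measurable (borel \<Otimes>\<^sub>M borel)" unfolding H_def by measurable
  then have H_borel: "H \<in> borel_measurable borel" by (simp add: borel_prod)
  have tensor_eq: "(\<lambda>x. h (base x) * g (extra x)) = (\<lambda>x. H (split_map x))"
    by (simp add: H_def split_map_def)
  have split_map_lborel: "split_map \<in> lborel \<rightarrow>\<^sub>M borel" by simp
  have distr_eq: "distr lborel borel split_map = (lborel \<Otimes>\<^sub>M lborel :: ((real^'n) \<times> real) measure)"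
    by (simp add: distr_split_map lborel_prod)
  have H_int: "integrable (lborel \<Otimes>\<^sub>M lborel) H"
  proof (rule lborel_pair.Fubini_integrable[OF H_meas])
    have "integrable lborel (\<lambda>x. \<bar>h x\<bar> * (\<integral>y. \<bar>g y\<bar> \<partial>lborel))"
      using h by (intro integrable_mult_left) auto
    then show "integrable lborel (\<lambda>x. \<integral>y. norm (H (x, y)) \<partial>lborel)"
      by (simp add: H_def abs_mult)
    show "AE x in lborel. integrable lborel (\<lambda>y. H (x, y))"
      using g by (auto simp: H_def intro!: integrable_mult_right)
  qed
  show "integrable lborel (\<lambda>x. h (base x) * g (extra x))"
    unfolding tensor_eq using H_int integrable_distr_eq[OF split_map_lborel H_borel] distr_eq by simp
  have "(\<integral>x. h (base x) * g (extra x) \<partial>lborel) = integral\<^sup>L (distr lborel borel split_map) H"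
    unfolding tensor_eq by (rule integral_distr[OF split_map_lborel H_borel, symmetric])
  also have "\<dots> = (\<integral>x. (\<integral>y. H (x, y) \<partial>lborel) \<partial>lborel)"
    unfolding distr_eq by (rule lborel_pair.integral_fst'[OF H_int, symmetric])
  also have "\<dots> = integral\<^sup>L lborel h * integral\<^sup>L lborel g" by (simp add: H_def)
  finally show "(\<integral>x. h (base x) * g (extra x) \<partial>lborel) = integral\<^sup>L lborel h * integral\<^sup>L lborel g" .
qed

end

subsection \<open>Tensoring with a Gaussian\<close>

definition Hf_bordered :: "(real^'n::finite \<Rightarrow> real) \<Rightarrow> real \<Rightarrow> 'n option \<Rightarrow> 'n option \<Rightarrow> real^'n \<Rightarrow> real" where
  "Hf_bordered f a p q = (case (p, q) of
       (Some l, Some k) \<Rightarrow> Hf f l k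
     | (None, None) \<Rightarrow> (\<lambda>_. a)
     | _ \<Rightarrow> (\<lambda>_. 0))"

locale gaussian_tensor = coord_split e for e :: "'m::finite \<Rightarrow> 'n::finite option" +
  fixes f :: "real^'n \<Rightarrow> real" and s :: real
  assumes f_pos: "\<And>x. f x > 0" and s_pos: "s > 0"
begin

definition F :: "real^'m \<Rightarrow> real" where "F x = f (base x) * normal_density 0 s (extra x)"

definition pd_ln_F :: "'m \<Rightarrow> real^'n \<Rightarrow> real \<Rightarrow> real" where
  "pd_ln_F j u y = (case e j of Some k \<Rightarrow> pd k (\<lambda>y. ln (f y)) u | None \<Rightarrow> - y / s\<^sup>2)"

lemma ln_F: "(\<lambda>y. ln (F y)) = (\<lambda>y. ln (f (base y)) + ln (normal_density 0 s (extra y)))"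
proof
  fix y
  have "f (base y) > 0" "normal_density 0 s (extra y) > 0"
    using f_pos s_pos normal_density_pos by auto
  then show "ln (F y) = ln (f (base y)) + ln (normal_density 0 s (extra y))"
    by (simp add: F_def ln_mult)
qed

lemma deriv_ln_normal_density: "deriv (\<lambda>t. ln (normal_density 0 s (y + t))) 0 = - y / s\<^sup>2"
proof -
  have "(\<lambda>t. ln (normal_density 0 s (y + t))) = (\<lambda>t. ln (1 / sqrt (2 * pi * s\<^sup>2)) - (y + t)\<^sup>2 / (2 * s\<^sup>2))"
    using s_pos by (simp add: normal_density_def ln_div fun_eq_iff)
  moreover have "((\<lambda>t. ln (1 / sqrt (2 * pi * s\<^sup>2)) - (y + t)\<^sup>2 / (2 * s\<^sup>2)) has_field_derivative - y / s\<^sup>2) (at 0)"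
    using s_pos by (auto intro!: derivative_eq_intros simp: field_simps power2_eq_square)
  ultimately show ?thesis by (simp add: DERIV_imp_deriv)
qed

lemma pd_ln_F: "pd j (\<lambda>y. ln (F y)) = (\<lambda>y. pd_ln_F j (base y) (extra y))"
  unfolding ln_F pd_base_extra[where \<Phi>="\<lambda>u y. ln (f u) + ln (normal_density 0 s y)", abs_def]
  by (cases "e j") (simp_all add: pd_ln_F_def deriv_add_const deriv_const_add deriv_ln_normal_density pd_def)

lemma Hf_F: "Hf F i j = (\<lambda>x. Hf_bordered f (1 / s\<^sup>2) (e i) (e j) (base x))"
proof
  fix x
  have "((\<lambda>t. (- y - t) / s\<^sup>2) has_field_derivative - 1 / s\<^sup>2) (at 0)" for y
    using s_pos by (auto intro!: derivative_eq_intros simp: field_simps)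
  then have "deriv (\<lambda>t. - (y + t) / s\<^sup>2) 0 = - 1 / s\<^sup>2" for y
    by (simp add: DERIV_imp_deriv)
  then show "Hf F i j x = Hf_bordered f (1 / s\<^sup>2) (e i) (e j) (base x)"
    unfolding Hf_def pd_ln_F pd_base_extra[where \<Phi>="pd_ln_F j"]
    by (cases "e i"; cases "e j") (simp_all add: pd_ln_F_def Hf_bordered_def Hf_def pd_def)
qed

lemma tr_H_F: "tr_H F x = 1 / s\<^sup>2 + tr_H f (base x)"
  unfolding tr_H_def Hf_F by (simp add: sum_coord_split Hf_bordered_def)

lemma tr_H2_F: "tr_H2 F x = (1 / s\<^sup>2)\<^sup>2 + tr_H2 f (base x)"
  unfolding tr_H2_def Hf_F by (simp add: sum_coord_split Hf_bordered_def power2_eq_square)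

lemma tr_H3_F: "tr_H3 F x = (1 / s\<^sup>2) ^ 3 + tr_H3 f (base x)"
  unfolding tr_H3_def Hf_F by (simp add: sum_coord_split Hf_bordered_def power3_eq_cube)

lemma gradH_sq_F: "gradH_sq F x = gradH_sq f (base x)"
proof -
  have "pd k (\<lambda>x. Hf_bordered f a p p' (base x)) x =
     (case (e k, p, p') of (Some m, Some l, Some l') \<Rightarrow> pd m (Hf f l l') (base x) | _ \<Rightarrow> 0)" for k a p p'
    unfolding pd_base_extra[where \<Phi>="\<lambda>u y. Hf_bordered f a p p' u"]
    by (cases "e k"; cases p; cases p') (simp_all add: Hf_bordered_def pd_def)
  then show ?thesis
    unfolding gradH_sq_def Hf_F by (simp add: sum_coord_split)
qed

definition base_dirs :: "'m list \<Rightarrow> 'n list" where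
  "base_dirs is = concat (map (\<lambda>i. case e i of Some k \<Rightarrow> [k] | None \<Rightarrow> []) is)"

definition extra_count :: "'m list \<Rightarrow> nat" where
  "extra_count is = length (filter (\<lambda>i. e i = None) is)"

lemma iter_pd_F:
  assumes "smooth_fun f"
  shows "iter_pd is F = (\<lambda>x. iter_pd (base_dirs is) f (base x) * gauss_deriv s (extra_count is) (extra x))"
proof (induction "is")
  case Nil
  show ?case by (simp add: F_def base_dirs_def extra_count_def gauss_deriv_0)
next
  case (Cons i "is")
  let ?A = "iter_pd (base_dirs is) f" and ?B = "gauss_deriv s (extra_count is)"
  have A_diff: "?A differentiable (at u)" for u using assms by (simp add: smooth_fun_def)
  have "pd i (\<lambda>x. ?A (base x) * ?B (extra x)) x
      = iter_pd (base_dirs (i # is)) f (base x) * gauss_deriv s (extra_count (i # is)) (extra x)" for x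
  proof (cases "e i")
    case None
    have "((\<lambda>t. extra x + t) has_field_derivative 1) (at 0)"
      by (auto intro!: derivative_eq_intros)
    from DERIV_chain2[OF has_field_derivative_gauss_deriv[OF s_pos] this]
    have "((\<lambda>t. ?B (extra x + t)) has_field_derivative gauss_deriv s (Suc (extra_count is)) (extra x)) (at 0)"
      by simp
    from DERIV_cmult[OF this, of "?A (base x)"]
    have "deriv (\<lambda>t. ?A (base x) * ?B (extra x + t)) 0 = ?A (base x) * gauss_deriv s (Suc (extra_count is)) (extra x)"
      by (rule DERIV_imp_deriv)
    moreover have "pd i (\<lambda>x. ?A (base x) * ?B (extra x)) x = deriv (\<lambda>t. ?A (base x) * ?B (extra x + t)) 0"
      using pd_base_extra[where \<Phi>="\<lambda>u y. ?A u * ?B y", of i x] None by simp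
    ultimately show ?thesis using None by (simp add: base_dirs_def extra_count_def)
  next
    case (Some k)
    from DERIV_cmult_right[OF has_field_derivative_along_line[OF A_diff, of "base x" "axis k 1"], of "?B (extra x)"]
    have "deriv (\<lambda>t. ?A (base x + t *\<^sub>R axis k 1) * ?B (extra x)) 0 = pd k ?A (base x) * ?B (extra x)"
      unfolding pd_def by (rule DERIV_imp_deriv)
    moreover have "pd i (\<lambda>x. ?A (base x) * ?B (extra x)) x = deriv (\<lambda>t. ?A (base x + t *\<^sub>R axis k 1) * ?B (extra x)) 0"
      using pd_base_extra[where \<Phi>="\<lambda>u y. ?A u * ?B y", of i x] Some by simp
    ultimately show ?thesis using Some by (simp add: base_dirs_def extra_count_def)
  qed
  then show ?case by (simp add: Cons.IH fun_eq_iff)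
qed

lemma smooth_F: "smooth_fun f \<Longrightarrow> smooth_fun F"
  using iter_pd_F differentiable_tensor gauss_deriv_differentiable[OF s_pos]
  by (simp add: smooth_fun_def)

lemma rapidly_decaying_F:
  assumes "smooth_fun f" and "rapidly_decaying f"
  shows "rapidly_decaying F"
  unfolding rapidly_decaying_def iter_pd_F[OF assms(1)]
proof (intro allI bounded_moments_tensor)
  show "\<exists>C. \<forall>u. \<bar>norm u ^ j * iter_pd (base_dirs is) f u\<bar> \<le> C" for "is" j
    using assms(2) unfolding rapidly_decaying_def bounded_iff by (auto simp: real_norm_def)
  show "\<exists>C. \<forall>y. \<bar>y\<bar> ^ j * \<bar>gauss_deriv s (extra_count is) y\<bar> \<le> C" for "is" j
    using gauss_deriv_moment_bounded[OF s_pos] .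
qed

lemma
  assumes f_int: "integrable lborel f" and "integral\<^sup>L lborel f = 1"
    and g_int: "integrable lborel (\<lambda>u. g u * f u)"
  shows integrable_F_weighted: "integrable lborel (\<lambda>x. (c + g (base x)) * F x)"
    and integral_F_weighted: "(\<integral>x. (c + g (base x)) * F x \<partial>lborel) = c + (\<integral>u. g u * f u \<partial>lborel)"
proof -
  have h_int: "integrable lborel (\<lambda>u. c * f u + g u * f u)" using f_int g_int by auto
  have eq: "(\<lambda>x. (c + g (base x)) * F x) = (\<lambda>x. (c * f (base x) + g (base x) * f (base x)) * normal_density 0 s (extra x))"
    by (simp add: F_def algebra_simps)
  show "integrable lborel (\<lambda>x. (c + g (base x)) * F x)"
    unfolding eq using integrable_tensor[OF h_int integrable_normal_density[OF s_pos]] .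
  show "(\<integral>x. (c + g (base x)) * F x \<partial>lborel) = c + (\<integral>u. g u * f u \<partial>lborel)"
    unfolding eq integral_tensor[OF h_int integrable_normal_density[OF s_pos]]
    using f_int g_int assms(2) s_pos by simp
qed

lemma I_fun_F: "admissible f \<Longrightarrow> I_fun F = 1 / s\<^sup>2 + I_fun f"
  using integral_F_weighted[of "tr_H f" "1 / s\<^sup>2"]
  by (simp add: admissible_def I_fun_def tr_H_F)

lemma Q_fun_F: "admissible f \<Longrightarrow> Q_fun F = (1 / s\<^sup>2)\<^sup>2 + Q_fun f"
  using integral_F_weighted[of "tr_H2 f" "(1 / s\<^sup>2)\<^sup>2"]
  by (simp add: admissible_def Q_fun_def tr_H2_F)

lemma D_fun_F: "admissible f \<Longrightarrow> D_fun F = 2 * (1 / s\<^sup>2) ^ 3 + D_fun f"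
  using integral_F_weighted[of "\<lambda>u. gradH_sq f u + 2 * tr_H3 f u" "2 * (1 / s\<^sup>2) ^ 3"]
  by (simp add: admissible_def D_fun_def tr_H3_F gradH_sq_F algebra_simps)

lemma admissible_F:
  assumes "admissible f"
  shows "admissible F"
proof -
  have "(1 / s\<^sup>2)\<^sup>2 + Q_fun f > 0"
    using assms by (simp add: admissible_def add_nonneg_pos)
  moreover have "integrable lborel F" "integral\<^sup>L lborel F = 1"
    using assms integrable_F_weighted[of "\<lambda>_. 0" 1] integral_F_weighted[of "\<lambda>_. 0" 1]
    by (simp_all add: admissible_def)
  moreover have "integrable lborel (\<lambda>x. tr_H F x * F x)"
    using assms integrable_F_weighted[of "tr_H f" "1 / s\<^sup>2"]
    by (simp add: admissible_def tr_H_F)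
  moreover have "integrable lborel (\<lambda>x. tr_H2 F x * F x)"
    using assms integrable_F_weighted[of "tr_H2 f" "(1 / s\<^sup>2)\<^sup>2"]
    by (simp add: admissible_def tr_H2_F)
  moreover have "integrable lborel (\<lambda>x. (gradH_sq F x + 2 * tr_H3 F x) * F x)"
    using assms integrable_F_weighted[of "\<lambda>u. gradH_sq f u + 2 * tr_H3 f u" "2 * (1 / s\<^sup>2) ^ 3"]
    by (simp add: admissible_def tr_H3_F gradH_sq_F algebra_simps)
  ultimately show ?thesis
    using assms f_pos s_pos smooth_F rapidly_decaying_F Q_fun_F
    by (simp add: admissible_def F_def normal_density_pos)
qed

end

lemma theta_star_le_lower_dim_ratio:
  fixes e :: "'m::finite \<Rightarrow> 'n::finite option" and f :: "real^'n \<Rightarrow> real"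
  assumes "bij e" and f_adm: "admissible f"
  shows "theta_star TYPE('m) \<le> ereal (I_fun f * D_fun f / (Q_fun f)\<^sup>2)"
proof -
  define ratio where "ratio a = (a + I_fun f) * (2 * a ^ 3 + D_fun f) / (a\<^sup>2 + Q_fun f)\<^sup>2" for a :: real
  have le: "theta_star TYPE('m) \<le> ereal (ratio (inverse (real (Suc n))))" for n
  proof -
    define s where "s = sqrt (real (Suc n))"
    interpret gaussian_tensor e f s
      using \<open>bij e\<close> f_adm by unfold_locales (auto simp: s_def admissible_def)
    have "1 / s\<^sup>2 = inverse (real (Suc n))" by (simp add: s_def divide_inverse)
    then have "ratio (inverse (real (Suc n))) = I_fun F * D_fun F / (Q_fun F)\<^sup>2"
      using I_fun_F Q_fun_F D_fun_F f_adm by (simp add: ratio_def)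
    then show ?thesis
      unfolding theta_star_def using admissible_F[OF f_adm] by (auto intro: INF_lower)
  qed
  have "Q_fun f > 0" using f_adm by (simp add: admissible_def)
  then have "(\<lambda>n. ratio (inverse (real (Suc n)))) \<longlonglongrightarrow> ratio 0"
    unfolding ratio_def by (intro tendsto_intros LIMSEQ_inverse_real_of_nat) auto
  moreover have "ratio 0 = I_fun f * D_fun f / (Q_fun f)\<^sup>2"
    by (simp add: ratio_def)
  ultimately have "(\<lambda>n. ereal (ratio (inverse (real (Suc n))))) \<longlonglongrightarrow> ereal (I_fun f * D_fun f / (Q_fun f)\<^sup>2)"
    by (simp add: tendsto_ereal)
  then show ?thesis
    by (rule LIMSEQ_le_const) (use le in auto)
qed

theorem proposition7p2:
  assumes "CARD('m::finite) = CARD('n::finite) + 1"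
  shows "theta_star TYPE('m) \<le> theta_star TYPE('n)"
proof -
  have "CARD('n option) = CARD('n) + 1"
    by (simp add: UNIV_option_conv card_image)
  then obtain e :: "'m \<Rightarrow> 'n option" where "bij_betw e UNIV UNIV"
    using finite_same_card_bij[of "UNIV :: 'm set" "UNIV :: 'n option set"] assms by auto
  then have "bij e" by (simp add: bij_def bij_betw_def)
  then show ?thesis
    unfolding theta_star_def[of "TYPE('n)"] by (intro INF_greatest theta_star_le_lower_dim_ratio) auto
qed

end
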